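(* Consider equation (E). Assume that for every $i=1,\dots,m$, $$\liminf_{t\to+\infty}\int_{\tau_i(t)}^{t}p_i(s)\,ds=\beta_i\in\Big(0,\frac1e\Big],$$ and let $\lambda_i^{*}$ be the smallest real root of $e^{\beta_i\lambda}=\lambda$. Assume there exist continuous non-decreasing functions $\sigma_1,\dots,\sigma_m:[t_0,\infty)\to\mathbb{R}$ with $\tau_i(t)\le\sigma_i(t)\le t$ for $t\ge t_0$, $i=1,\dots,m$, such that $$\limsup_{\varepsilon\to0+}\Bigg(\limsup_{t\to+\infty}\prod_{j=1}^{m}\bigg(\prod_{i=1}^{m}\int_{\sigma_j(t)}^{t}p_i(s)\exp\Big(\int_{\tau_i(s)}^{\sigma_i(t)}\sum_{k=1}^{m}(\lambda_k^{*}-\varepsilon)\,p_k(\xi)\,d\xi\Big)ds\bigg)^{1/m}\Bigg)>\frac{1}{m^{m}}.$$ Then all solutions of (E) oscillate.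
   Context: Equation (E) is $x'(t)+\sum_{i=1}^{m}p_i(t)\,x(\tau_i(t))=0$, $t\ge t_0$, where $m\ge1$ is an integer and, for each $i$, $p_i,\tau_i:[t_0,\infty)\to[0,\infty)$ are continuous, $\tau_i(t)\le t$ for $t\ge t_0$, and $\lim_{t\to\infty}\tau_i(t)=\infty$. Let $\tau(t)=\min_i\tau_i(t)$ and $\tau_{(-1)}(t)=\sup\{s:\tau(s)\le t\}$. A solution of (E) is a function $x\in C([T_0,\infty);\mathbb{R})$ for some $T_0\ge t_0$ which is continuously differentiable on $[\tau_{(-1)}(T_0),\infty)$ and satisfies (E) for $t\ge\tau_{(-1)}(T_0)$. A solution is oscillatory if it has arbitrarily large zeros; "all solutions oscillate" means every solution is oscillatory. *)

theory Defs
  imports "HOL-Analysis.Analysis"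
begin

definition oint :: "real \<Rightarrow> real \<Rightarrow> (real \<Rightarrow> real) \<Rightarrow> real" where
  "oint a b f = (if a \<le> b then integral {a..b} f else - integral {b..a} f)"

definition tau_min :: "nat \<Rightarrow> (nat \<Rightarrow> real \<Rightarrow> real) \<Rightarrow> real \<Rightarrow> real" where
  "tau_min m \<tau> t = Min ((\<lambda>i. \<tau> i t) ` {1..m})"

definition tau_inv :: "nat \<Rightarrow> (nat \<Rightarrow> real \<Rightarrow> real) \<Rightarrow> real \<Rightarrow> real \<Rightarrow> real" where
  "tau_inv m \<tau> t0 t = Sup {s. t0 \<le> s \<and> tau_min m \<tau> s \<le> t}"

definition is_solution ::
  "nat \<Rightarrow> (nat \<Rightarrow> real \<Rightarrow> real) \<Rightarrow> (nat \<Rightarrow> real \<Rightarrow> real) \<Rightarrow> real \<Rightarrow> real \<Rightarrow> (real \<Rightarrow> real) \<Rightarrow> bool" where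
  "is_solution m p \<tau> t0 T0 x \<longleftrightarrow>
     t0 \<le> T0 \<and> continuous_on {T0..} x \<and>
     (\<exists>x'. continuous_on {tau_inv m \<tau> t0 T0..} x' \<and>
        (\<forall>t \<in> {tau_inv m \<tau> t0 T0..}.
            (x has_real_derivative x' t) (at t within {tau_inv m \<tau> t0 T0..}) \<and>
            x' t + (\<Sum>i=1..m. p i t * x (\<tau> i t)) = 0))"

definition oscillatory :: "(real \<Rightarrow> real) \<Rightarrow> bool" where
  "oscillatory x \<longleftrightarrow> (\<forall>T. \<exists>t\<ge>T. x t = 0)"

end

theory Submission
  imports Defs
begin

text \<open>
  Since (E) is linear, a nonoscillatory solution may be taken eventually positive; it is then
  eventually decreasing. Gronwall-type comparison on \<open>[\<tau>\<^sub>i(t), t]\<close> shows that the ratio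
  \<open>x(\<tau>\<^sub>i(t))/x(t)\<close> has liminf \<open>l \<ge> \<lambda>\<^sub>i\<^sup>*\<close>: otherwise \<open>e\<^bsup>\<beta>\<^sub>i l\<^esup> \<le> l\<close>, and the intermediate value
  theorem produces a root of \<open>e\<^bsup>\<beta>\<^sub>i \<lambda>\<^esup> = \<lambda>\<close> below \<open>\<lambda>\<^sub>i\<^sup>*\<close>. Feeding \<open>x(\<tau>\<^sub>k(s)) > (\<lambda>\<^sub>k\<^sup>* - \<epsilon>) x(s)\<close> back
  into the equation gives \<open>x(\<tau>\<^sub>i(s)) \<ge> x(\<sigma>\<^sub>i(t)) exp (\<integral> \<Sum>\<^sub>k (\<lambda>\<^sub>k\<^sup>* - \<epsilon>) p\<^sub>k)\<close> for
  \<open>s \<in> [\<sigma>\<^sub>j(t), t]\<close>, so integrating (E) over that interval yields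
  \<open>\<Sum>\<^sub>i x(\<sigma>\<^sub>i(t)) A\<^sub>i\<^sub>j \<le> x(\<sigma>\<^sub>j(t))\<close> for the integrals \<open>A\<^sub>i\<^sub>j\<close> of the hypothesis. By AM-GM this
  forces \<open>\<Prod>\<^sub>j (\<Prod>\<^sub>i A\<^sub>i\<^sub>j)\<^bsup>1/m\<^esup> \<le> m\<^sup>-\<^sup>m\<close> for all large \<open>t\<close>, contradicting the hypothesis.
\<close>

lemma linear_differential_inequality:
  fixes x x' g :: "real \<Rightarrow> real"
  assumes "a \<le> b"
    and deriv: "\<And>t. t \<in> {a..b} \<Longrightarrow> (x has_real_derivative x' t) (at t within {a..b})"
    and g_cont: "continuous_on {a..b} g"
    and ineq: "\<And>t. t \<in> {a..b} \<Longrightarrow> x' t \<le> - g t * x t"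
  shows "x b * exp (integral {a..b} g) \<le> x a"
proof -
  define G where "G t = exp (integral {a..t} g)" for t
  define h' where "h' t = (x' t + g t * x t) * G t" for t
  have "((\<lambda>t. x t * G t) has_vector_derivative h' t) (at t within {a..b})" if t: "t \<in> {a..b}" for t
  proof -
    have "(G has_real_derivative G t * g t) (at t within {a..b})"
      unfolding G_def by (rule DERIV_chain2[OF DERIV_exp integral_has_real_derivative[OF g_cont t]])
    from DERIV_mult[OF deriv[OF t] this] show ?thesis
      by (simp add: has_real_derivative_iff_has_vector_derivative h'_def algebra_simps)
  qed
  then have "(h' has_integral (x b * G b - x a * G a)) {a..b}"
    by (rule fundamental_theorem_of_calculus[OF \<open>a \<le> b\<close>])
  moreover have "h' t \<le> 0" if "t \<in> {a..b}" for t
    using ineq[OF that] by (simp add: h'_def G_def mult_nonpos_nonneg)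
  ultimately have "x b * G b - x a * G a \<le> 0"
    by (rule has_integral_le[OF _ has_integral_0])
  then show ?thesis by (simp add: G_def)
qed

lemma least_fixed_point_exp_le:
  fixes \<beta> lam l :: real
  assumes least: "\<forall>y. exp (\<beta> * y) = y \<longrightarrow> lam \<le> y"
    and "0 \<le> l" "exp (\<beta> * l) \<le> l"
  shows "lam \<le> l"
proof -
  have "\<exists>y. 0 \<le> y \<and> y \<le> l \<and> exp (\<beta> * y) - y = 0"
    using assms by (intro IVT2) (auto intro!: continuous_intros)
  then show ?thesis using least by force
qed

lemma oint_eq_integral_diff:
  fixes g :: "real \<Rightarrow> real"
  assumes g: "g integrable_on {a..b}" and "u \<in> {a..b}" "v \<in> {a..b}"
  shows "oint u v g = integral {a..v} g - integral {a..u} g"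
proof -
  have combine: "integral {a..c} g + integral {c..d} g = integral {a..d} g"
    if "a \<le> c" "c \<le> d" "d \<le> b" for c d
    using that integrable_on_subinterval[OF g, of a d]
    by (intro Henstock_Kurzweil_Integration.integral_combine) auto
  show ?thesis
  proof (cases "u \<le> v")
    case True
    then show ?thesis using combine[of u v] assms(2,3) by (simp add: oint_def)
  next
    case False
    then show ?thesis using combine[of v u] assms(2,3) by (simp add: oint_def)
  qed
qed

lemma continuous_on_oint:
  fixes g :: "real \<Rightarrow> real"
  assumes "continuous_on {a..b} g" "continuous_on S u" "continuous_on S v"
    and "u ` S \<subseteq> {a..b}" "v ` S \<subseteq> {a..b}"
  shows "continuous_on S (\<lambda>s. oint (u s) (v s) g)"
proof -
  have g_int: "g integrable_on {a..b}"
    using assms(1) by (rule integrable_continuous_interval)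
  have indefinite: "continuous_on S (\<lambda>s. integral {a..w s} g)"
    if "continuous_on S w" "w ` S \<subseteq> {a..b}" for w
    by (rule continuous_on_compose2[OF indefinite_integral_continuous_1[OF g_int] that])
  have "continuous_on S (\<lambda>s. integral {a..v s} g - integral {a..u s} g)"
    using assms(2-5) by (intro continuous_on_diff indefinite)
  moreover have "integral {a..v s} g - integral {a..u s} g = oint (u s) (v s) g" if "s \<in> S" for s
    using assms(4,5) that by (intro oint_eq_integral_diff[OF g_int, symmetric]) auto
  ultimately show ?thesis
    by (rule continuous_on_eq)
qed

lemma prod_root_le_if_weighted_sums_le:
  fixes y :: "'a \<Rightarrow> real" and A :: "'a \<Rightarrow> 'a \<Rightarrow> real"
  assumes I: "finite I" "I \<noteq> {}"
    and y_pos: "\<And>i. i \<in> I \<Longrightarrow> 0 < y i"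
    and A_nonneg: "\<And>i j. i \<in> I \<Longrightarrow> j \<in> I \<Longrightarrow> 0 \<le> A i j"
    and sums_le: "\<And>j. j \<in> I \<Longrightarrow> (\<Sum>i\<in>I. y i * A i j) \<le> y j"
  shows "(\<Prod>j\<in>I. (\<Prod>i\<in>I. A i j) powr (1 / card I)) \<le> 1 / card I ^ card I"
proof -
  define n where "n = real (card I)"
  define P where "P = (\<Prod>i\<in>I. y i)"
  have n: "n > 0" using I by (simp add: n_def card_gt_0_iff)
  have P: "P > 0" unfolding P_def using y_pos by (intro prod_pos) auto
  have amgm: "n * (P powr (1 / n) * (\<Prod>i\<in>I. A i j) powr (1 / n)) \<le> y j" if j: "j \<in> I" for j
  proof -
    have "(\<Prod>i\<in>I. y i * A i j) powr (1 / n) \<le> (\<Sum>i\<in>I. y i * A i j) / n"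
      using arith_geom_mean[OF I, of "\<lambda>i. y i * A i j"] y_pos A_nonneg j
      by (auto simp: n_def sum_divide_distrib less_imp_le)
    also have "\<dots> \<le> y j / n" using sums_le[OF j] n by (simp add: divide_right_mono)
    finally show ?thesis
      using P A_nonneg j n
      by (simp add: P_def prod.distrib powr_mult prod_nonneg field_simps)
  qed
  have "(\<Prod>j\<in>I. n * (P powr (1 / n) * (\<Prod>i\<in>I. A i j) powr (1 / n))) \<le> (\<Prod>j\<in>I. y j)"
    using amgm A_nonneg y_pos n by (intro prod_mono) (auto intro!: mult_nonneg_nonneg prod_nonneg)
  moreover have "(P powr (1 / n)) ^ card I = P"
    using P n by (simp add: n_def powr_realpow[symmetric] powr_powr)
  ultimately have "n ^ card I * P * (\<Prod>j\<in>I. (\<Prod>i\<in>I. A i j) powr (1 / n)) \<le> P"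
    by (simp add: prod.distrib P_def)
  then show ?thesis
    using P n by (simp add: n_def field_simps)
qed

locale positive_delay_solution =
  fixes m :: nat and p \<tau> :: "nat \<Rightarrow> real \<Rightarrow> real" and x x' :: "real \<Rightarrow> real" and T :: real
  assumes derivative: "\<And>t. T \<le> t \<Longrightarrow> (x has_real_derivative x' t) (at t within {T..})"
    and equation: "\<And>t. T \<le> t \<Longrightarrow> x' t = - (\<Sum>i=1..m. p i t * x (\<tau> i t))"
    and p_nonneg: "\<And>i t. i \<in> {1..m} \<Longrightarrow> T \<le> t \<Longrightarrow> 0 \<le> p i t"
    and p_cont: "\<And>i. i \<in> {1..m} \<Longrightarrow> continuous_on {T..} (p i)"
    and tau_cont: "\<And>i. i \<in> {1..m} \<Longrightarrow> continuous_on {T..} (\<tau> i)"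
    and tau_le: "\<And>i t. i \<in> {1..m} \<Longrightarrow> T \<le> t \<Longrightarrow> \<tau> i t \<le> t"
    and tau_lim: "\<And>i. i \<in> {1..m} \<Longrightarrow> filterlim (\<tau> i) at_top at_top"
    and positive: "\<And>t. T \<le> t \<Longrightarrow> 0 < x t"
begin

lemma eventually_delayed:
  assumes "eventually P at_top"
  shows "eventually (\<lambda>t. \<forall>i\<in>{1..m}. P (\<tau> i t)) at_top"
  using tau_lim assms by (intro eventually_ball_finite) (auto simp: filterlim_iff)

lemma eventually_exp_integral_bound:
  assumes "eventually (\<lambda>s. \<forall>k\<in>{1..m}. r k * x s \<le> x (\<tau> k s)) at_top"
  shows "eventually (\<lambda>a. \<forall>b\<ge>a.
           x b * exp (integral {a..b} (\<lambda>s. \<Sum>k=1..m. r k * p k s)) \<le> x a) at_top"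
proof -
  obtain N where N: "\<And>s k. N \<le> s \<Longrightarrow> k \<in> {1..m} \<Longrightarrow> r k * x s \<le> x (\<tau> k s)"
    using assms unfolding eventually_at_top_linorder by blast
  have "x b * exp (integral {a..b} (\<lambda>s. \<Sum>k=1..m. r k * p k s)) \<le> x a"
    if ab: "max N T \<le> a" "a \<le> b" for a b
  proof (rule linear_differential_inequality[OF \<open>a \<le> b\<close>])
    fix s assume "s \<in> {a..b}"
    with ab have "T \<le> s" by auto
    show "(x has_real_derivative x' s) (at s within {a..b})"
      using derivative[OF \<open>T \<le> s\<close>] by (rule DERIV_subset) (use ab in auto)
  next
    show "continuous_on {a..b} (\<lambda>s. \<Sum>k=1..m. r k * p k s)"
      using ab by (intro continuous_on_sum continuous_on_mult_left continuous_on_subset[OF p_cont]) auto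
  next
    fix s assume "s \<in> {a..b}"
    with ab have s: "T \<le> s" "N \<le> s" by auto
    have "(\<Sum>k=1..m. r k * p k s) * x s = (\<Sum>k=1..m. p k s * (r k * x s))"
      by (subst sum_distrib_right) (simp add: mult_ac)
    also have "\<dots> \<le> (\<Sum>k=1..m. p k s * x (\<tau> k s))"
      using N[OF s(2)] p_nonneg[OF _ s(1)] by (intro sum_mono mult_left_mono) auto
    finally show "x' s \<le> - (\<Sum>k=1..m. r k * p k s) * x s"
      using equation[OF s(1)] by simp
  qed
  then show ?thesis
    unfolding eventually_at_top_linorder by blast
qed

lemma eventually_decreasing: "eventually (\<lambda>a. \<forall>b\<ge>a. x b \<le> x a) at_top"
proof -
  have "eventually (\<lambda>s. \<forall>k\<in>{1..m}. 0 * x s \<le> x (\<tau> k s)) at_top"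
    using eventually_delayed[OF eventually_ge_at_top[of T]]
    by eventually_elim (auto intro: less_imp_le positive)
  from eventually_exp_integral_bound[where r = "\<lambda>_. 0", OF this] show ?thesis
    by simp
qed

lemma eventually_delayed_ratio_ge_one:
  assumes i: "i \<in> {1..m}"
  shows "eventually (\<lambda>t. 1 \<le> x (\<tau> i t) / x t) at_top"
proof -
  have "eventually (\<lambda>t. \<forall>b\<ge>\<tau> i t. x b \<le> x (\<tau> i t)) at_top"
    using tau_lim[OF i] eventually_decreasing by (auto simp: filterlim_iff)
  with eventually_ge_at_top[of T] show ?thesis
  proof eventually_elim
    case (elim t)
    then have "x t \<le> x (\<tau> i t)" using tau_le[OF i] by auto
    then show ?case using positive[OF \<open>T \<le> t\<close>] by simp
  qed
qed

lemma eventually_delayed_ratio_exp_bound: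
  assumes i: "i \<in> {1..m}" and ratio: "eventually (\<lambda>s. \<rho> * x s \<le> x (\<tau> i s)) at_top"
  shows "eventually (\<lambda>t. x t * exp (\<rho> * integral {\<tau> i t..t} (p i)) \<le> x (\<tau> i t)) at_top"
proof -
  define r where "r k = (if k = i then \<rho> else 0)" for k
  have ratio_r: "eventually (\<lambda>s. \<forall>k\<in>{1..m}. r k * x s \<le> x (\<tau> k s)) at_top"
    using ratio eventually_delayed[OF eventually_ge_at_top[of T]]
    by eventually_elim (auto simp: r_def intro: less_imp_le positive)
  have sum_r: "(\<Sum>k=1..m. r k * p k s) = \<rho> * p i s" for s
  proof -
    have "(\<Sum>k=1..m. r k * p k s) = (\<Sum>k=1..m. if k = i then \<rho> * p i s else 0)"
      by (rule sum.cong) (auto simp: r_def)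
    then show ?thesis using i by simp
  qed
  have "eventually (\<lambda>a. \<forall>b\<ge>a. x b * exp (\<rho> * integral {a..b} (p i)) \<le> x a) at_top"
    using eventually_exp_integral_bound[OF ratio_r] unfolding sum_r by simp
  then have "eventually (\<lambda>t. \<forall>b\<ge>\<tau> i t. x b * exp (\<rho> * integral {\<tau> i t..b} (p i)) \<le> x (\<tau> i t)) at_top"
    using tau_lim[OF i] by (auto simp: filterlim_iff)
  with eventually_ge_at_top[of T] show ?thesis
    by eventually_elim (use tau_le[OF i] in auto)
qed

lemma liminf_delayed_ratio_ge_exp:
  assumes i: "i \<in> {1..m}" and "0 \<le> \<rho>"
    and ratio: "ereal \<rho> < Liminf at_top (\<lambda>t. ereal (x (\<tau> i t) / x t))"
    and integral: "ereal b < Liminf at_top (\<lambda>t. ereal (integral {\<tau> i t..t} (p i)))"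
  shows "ereal (exp (\<rho> * b)) \<le> Liminf at_top (\<lambda>t. ereal (x (\<tau> i t) / x t))"
proof -
  have "eventually (\<lambda>s. \<rho> * x s \<le> x (\<tau> i s)) at_top"
    using less_LiminfD[OF ratio] eventually_ge_at_top[of T]
    by eventually_elim (auto simp: pos_less_divide_eq positive less_imp_le)
  from eventually_delayed_ratio_exp_bound[OF i this] less_LiminfD[OF integral] eventually_ge_at_top[of T]
  have "eventually (\<lambda>t. exp (\<rho> * b) \<le> x (\<tau> i t) / x t) at_top"
  proof eventually_elim
    case (elim t)
    have "exp (\<rho> * b) * x t \<le> exp (\<rho> * integral {\<tau> i t..t} (p i)) * x t"
      using elim positive[of t] \<open>0 \<le> \<rho>\<close> by (intro mult_right_mono) (auto intro: mult_left_mono)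
    also have "\<dots> \<le> x (\<tau> i t)"
      using elim by (simp add: mult.commute)
    finally show ?case
      using positive[of t] elim by (simp add: pos_le_divide_eq)
  qed
  then show ?thesis
    by (intro Liminf_bounded) (auto elim: eventually_mono)
qed

lemma liminf_delayed_ratio_ge_least_root:
  assumes i: "i \<in> {1..m}"
    and liminf: "Liminf at_top (\<lambda>t. ereal (integral {\<tau> i t..t} (p i))) = ereal \<beta>"
    and "0 < \<beta>" and least: "\<forall>y. exp (\<beta> * y) = y \<longrightarrow> lam \<le> y"
  shows "ereal lam \<le> Liminf at_top (\<lambda>t. ereal (x (\<tau> i t) / x t))" (is "_ \<le> ?L")
proof (rule ccontr)
  assume "\<not> ereal lam \<le> ?L"
  moreover have "ereal 1 \<le> ?L"
    using eventually_delayed_ratio_ge_one[OF i]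
    by (intro Liminf_bounded) (auto elim: eventually_mono)
  ultimately obtain l where L: "?L = ereal l" and "1 \<le> l" "l < lam"
    by (cases ?L) auto
  have "exp ((l - \<delta>) * (\<beta> - \<delta>)) \<le> l" if "0 < \<delta>" "\<delta> < min 1 \<beta>" for \<delta>
    using liminf_delayed_ratio_ge_exp[OF i, of "l - \<delta>" "\<beta> - \<delta>"] L liminf that \<open>1 \<le> l\<close>
    by simp
  then have "eventually (\<lambda>\<delta>. exp ((l - \<delta>) * (\<beta> - \<delta>)) \<le> l) (at_right 0)"
    using \<open>0 < \<beta>\<close> unfolding eventually_at_right_field by (intro exI[of _ "min 1 \<beta>"]) auto
  moreover have "((\<lambda>\<delta>. exp ((l - \<delta>) * (\<beta> - \<delta>))) \<longlongrightarrow> exp ((l - 0) * (\<beta> - 0))) (at_right 0)"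
    by (intro tendsto_intros)
  ultimately have "exp (\<beta> * l) \<le> l"
    by (auto simp: mult.commute intro: tendsto_upperbound)
  then have "lam \<le> l"
    using least_fixed_point_exp_le[OF least] \<open>1 \<le> l\<close> by simp
  with \<open>l < lam\<close> show False by simp
qed

lemma integral_delayed_terms_le:
  assumes "T \<le> a" "a \<le> b"
    and f_int: "\<And>i. i \<in> {1..m} \<Longrightarrow> f i integrable_on {a..b}"
    and f_le: "\<And>i s. i \<in> {1..m} \<Longrightarrow> s \<in> {a..b} \<Longrightarrow> f i s \<le> p i s * x (\<tau> i s)"
  shows "(\<Sum>i=1..m. integral {a..b} (f i)) \<le> x a - x b"
proof -
  have "(x' has_integral (x b - x a)) {a..b}"
  proof (rule fundamental_theorem_of_calculus[OF \<open>a \<le> b\<close>])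
    fix s assume "s \<in> {a..b}"
    then show "(x has_vector_derivative x' s) (at s within {a..b})"
      unfolding has_real_derivative_iff_has_vector_derivative[symmetric]
      by (intro DERIV_subset[OF derivative]) (use assms(1) in auto)
  qed
  from has_integral_neg[OF this]
  have p_sum: "((\<lambda>s. \<Sum>i=1..m. p i s * x (\<tau> i s)) has_integral (x a - x b)) {a..b}"
    using assms(1) equation by (subst has_integral_cong) auto
  have f_sum: "((\<lambda>s. \<Sum>i=1..m. f i s) has_integral (\<Sum>i=1..m. integral {a..b} (f i))) {a..b}"
    using f_int by (intro has_integral_sum) auto
  from f_sum p_sum show ?thesis
    by (rule has_integral_le) (use f_le in \<open>auto intro: sum_mono\<close>)
qed

lemma product_bound_at:
  fixes g :: "real \<Rightarrow> real" and \<sigma> :: "nat \<Rightarrow> real \<Rightarrow> real"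
  assumes "1 \<le> m" and g_cont: "continuous_on {T..} g"
    and sigma: "\<And>j. j \<in> {1..m} \<Longrightarrow> T \<le> \<sigma> j t \<and> \<sigma> j t \<le> t"
    and delayed: "\<And>i j s. i \<in> {1..m} \<Longrightarrow> j \<in> {1..m} \<Longrightarrow> s \<in> {\<sigma> j t..t} \<Longrightarrow>
        T \<le> \<tau> i s \<and> \<tau> i s \<le> \<sigma> i t \<and> x (\<sigma> i t) * exp (oint (\<tau> i s) (\<sigma> i t) g) \<le> x (\<tau> i s)"
  shows "(\<Prod>j=1..m. (\<Prod>i=1..m. integral {\<sigma> j t..t} (\<lambda>s. p i s * exp (oint (\<tau> i s) (\<sigma> i t) g)))
           powr (1 / real m)) \<le> 1 / real m ^ m"
proof -
  define f where "f i s = p i s * exp (oint (\<tau> i s) (\<sigma> i t) g)" for i s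
  have f_int: "f i integrable_on {\<sigma> j t..t}" if ij: "i \<in> {1..m}" "j \<in> {1..m}" for i j
  proof -
    have "continuous_on {\<sigma> j t..t} (\<lambda>s. oint (\<tau> i s) (\<sigma> i t) g)"
    proof (rule continuous_on_oint)
      show "continuous_on {T..\<sigma> i t} g" by (rule continuous_on_subset[OF g_cont]) auto
      show "continuous_on {\<sigma> j t..t} (\<tau> i)"
        by (rule continuous_on_subset[OF tau_cont[OF ij(1)]]) (use sigma[OF ij(2)] in auto)
      show "\<tau> i ` {\<sigma> j t..t} \<subseteq> {T..\<sigma> i t}" using delayed[OF ij] by auto
      show "(\<lambda>s. \<sigma> i t) ` {\<sigma> j t..t} \<subseteq> {T..\<sigma> i t}" using sigma[OF ij(1)] by auto
    qed simp
    moreover have "continuous_on {\<sigma> j t..t} (p i)"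
      by (rule continuous_on_subset[OF p_cont[OF ij(1)]]) (use sigma[OF ij(2)] in auto)
    ultimately show ?thesis
      unfolding f_def
      by (intro integrable_continuous_interval continuous_on_mult continuous_on_exp)
  qed
  have f_nonneg: "0 \<le> f i s" if "i \<in> {1..m}" "j \<in> {1..m}" "s \<in> {\<sigma> j t..t}" for i j s
    using p_nonneg[of i s] sigma[OF that(2)] that by (simp add: f_def)
  have "(\<Sum>i=1..m. x (\<sigma> i t) * integral {\<sigma> j t..t} (f i)) \<le> x (\<sigma> j t)" if j: "j \<in> {1..m}" for j
  proof -
    have "(\<Sum>i=1..m. integral {\<sigma> j t..t} (\<lambda>s. x (\<sigma> i t) * f i s)) \<le> x (\<sigma> j t) - x t"
    proof (rule integral_delayed_terms_le)
      fix i s assume i: "i \<in> {1..m}" and s: "s \<in> {\<sigma> j t..t}"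
      have "0 \<le> p i s" using p_nonneg[OF i] sigma[OF j] s by auto
      then show "x (\<sigma> i t) * f i s \<le> p i s * x (\<tau> i s)"
        using delayed[OF i j s] by (simp add: f_def mult_left_mono mult.left_commute)
    qed (use sigma[OF j] f_int[OF _ j] in \<open>auto intro: integrable_on_mult_right\<close>)
    then show ?thesis
      using positive[of t] sigma[OF j] by simp
  qed
  then have "(\<Prod>j\<in>{1..m}. (\<Prod>i\<in>{1..m}. integral {\<sigma> j t..t} (f i)) powr (1 / card {1..m}))
      \<le> 1 / card {1..m} ^ card {1..m}"
    using positive sigma f_int f_nonneg \<open>1 \<le> m\<close>
    by (intro prod_root_le_if_weighted_sums_le[of "{1..m}" "\<lambda>i. x (\<sigma> i t)"])
       (auto intro!: integral_nonneg)
  then show ?thesis by (simp add: f_def[abs_def])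
qed

lemma eventually_product_bound:
  assumes "1 \<le> m"
    and ratio: "eventually (\<lambda>s. \<forall>k\<in>{1..m}. r k * x s \<le> x (\<tau> k s)) at_top"
    and sigma_mono: "\<And>i. i \<in> {1..m} \<Longrightarrow> mono_on {T..} (\<sigma> i)"
    and sigma_bounds: "\<And>i t. i \<in> {1..m} \<Longrightarrow> T \<le> t \<Longrightarrow> \<tau> i t \<le> \<sigma> i t \<and> \<sigma> i t \<le> t"
  shows "eventually (\<lambda>t. (\<Prod>j=1..m. (\<Prod>i=1..m. integral {\<sigma> j t..t} (\<lambda>s. p i s *
           exp (oint (\<tau> i s) (\<sigma> i t) (\<lambda>\<xi>. \<Sum>k=1..m. r k * p k \<xi>)))) powr (1 / real m))
           \<le> 1 / real m ^ m) at_top"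
proof -
  define g where "g \<xi> = (\<Sum>k=1..m. r k * p k \<xi>)" for \<xi>
  have g_cont: "continuous_on {T..} g"
    unfolding g_def by (intro continuous_on_sum continuous_on_mult_left p_cont) auto
  define Q where "Q s \<longleftrightarrow> T \<le> s \<and> (\<forall>i\<in>{1..m}. T \<le> \<tau> i s \<and>
      (\<forall>b\<ge>\<tau> i s. x b * exp (integral {\<tau> i s..b} g) \<le> x (\<tau> i s)))" for s
  have "eventually Q at_top"
    using eventually_ge_at_top[of T]
      eventually_delayed[OF eventually_conj[OF eventually_ge_at_top[of T] eventually_exp_integral_bound[OF ratio]]]
    unfolding Q_def g_def by eventually_elim auto
  then have "eventually (\<lambda>t. \<forall>j\<in>{1..m}. \<forall>s\<ge>\<tau> j t. Q s) at_top"
    by (intro eventually_delayed eventually_all_ge_at_top)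
  with eventually_ge_at_top[of T] show ?thesis
  proof eventually_elim
    case (elim t)
    have sigma: "T \<le> \<sigma> j t \<and> \<sigma> j t \<le> t" if "j \<in> {1..m}" for j
      using elim sigma_bounds[OF that] that by (force simp: Q_def)
    show ?case unfolding g_def[symmetric]
    proof (rule product_bound_at[where \<sigma> = \<sigma> and t = t, OF \<open>1 \<le> m\<close> g_cont sigma])
      fix i j s assume i: "i \<in> {1..m}" and j: "j \<in> {1..m}" and s: "s \<in> {\<sigma> j t..t}"
      then have "\<tau> j t \<le> s" using sigma_bounds[OF j \<open>T \<le> t\<close>] by auto
      then have "Q s" using elim j by auto
      then have "T \<le> s" by (simp add: Q_def)
      have "\<tau> i s \<le> \<sigma> i s" using sigma_bounds[OF i \<open>T \<le> s\<close>] by simp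
      also have "\<sigma> i s \<le> \<sigma> i t"
        using sigma_mono[OF i] \<open>T \<le> s\<close> s by (auto elim: mono_onD)
      finally show "T \<le> \<tau> i s \<and> \<tau> i s \<le> \<sigma> i t \<and>
          x (\<sigma> i t) * exp (oint (\<tau> i s) (\<sigma> i t) g) \<le> x (\<tau> i s)"
        using \<open>Q s\<close> i by (auto simp: Q_def oint_def)
    qed
  qed
qed

lemma limsup_product_le:
  assumes "1 \<le> m"
    and beta: "\<forall>i\<in>{1..m}. Liminf at_top (\<lambda>t. ereal (integral {\<tau> i t..t} (p i))) = ereal (\<beta> i) \<and> 0 < \<beta> i"
    and least: "\<forall>i\<in>{1..m}. \<forall>y. exp (\<beta> i * y) = y \<longrightarrow> lam i \<le> y"
    and sigma_mono: "\<And>i. i \<in> {1..m} \<Longrightarrow> mono_on {T..} (\<sigma> i)"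
    and sigma_bounds: "\<And>i t. i \<in> {1..m} \<Longrightarrow> T \<le> t \<Longrightarrow> \<tau> i t \<le> \<sigma> i t \<and> \<sigma> i t \<le> t"
  shows "Limsup (at_right 0) (\<lambda>\<epsilon>::real. Limsup at_top (\<lambda>t. ereal
           (\<Prod>j=1..m. (\<Prod>i=1..m. integral {\<sigma> j t..t} (\<lambda>s. p i s *
              exp (oint (\<tau> i s) (\<sigma> i t) (\<lambda>\<xi>. \<Sum>k=1..m. (lam k - \<epsilon>) * p k \<xi>))))
            powr (1 / real m)))) \<le> ereal (1 / real m ^ m)"
proof (rule Limsup_bounded[OF eventually_mono[OF eventually_at_right_less]])
  fix \<epsilon> :: real assume "0 < \<epsilon>"
  have "eventually (\<lambda>s. \<forall>k\<in>{1..m}. (lam k - \<epsilon>) * x s \<le> x (\<tau> k s)) at_top"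
  proof (intro eventually_ball_finite ballI)
    fix k assume k: "k \<in> {1..m}"
    have "ereal (lam k - \<epsilon>) < ereal (lam k)" using \<open>0 < \<epsilon>\<close> by simp
    also have "\<dots> \<le> Liminf at_top (\<lambda>t. ereal (x (\<tau> k t) / x t))"
      using beta least k by (intro liminf_delayed_ratio_ge_least_root) auto
    finally have "eventually (\<lambda>s. ereal (lam k - \<epsilon>) < ereal (x (\<tau> k s) / x s)) at_top"
      by (rule less_LiminfD)
    with eventually_ge_at_top[of T]
    show "eventually (\<lambda>s. (lam k - \<epsilon>) * x s \<le> x (\<tau> k s)) at_top"
      by eventually_elim (auto simp: pos_less_divide_eq positive less_imp_le)
  qed simp
  from eventually_product_bound[OF \<open>1 \<le> m\<close> this sigma_mono sigma_bounds]
  show "Limsup at_top (\<lambda>t. ereal (\<Prod>j=1..m. (\<Prod>i=1..m. integral {\<sigma> j t..t} (\<lambda>s. p i s *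
          exp (oint (\<tau> i s) (\<sigma> i t) (\<lambda>\<xi>. \<Sum>k=1..m. (lam k - \<epsilon>) * p k \<xi>))))
          powr (1 / real m))) \<le> ereal (1 / real m ^ m)"
    by (intro Limsup_bounded) (auto elim: eventually_mono)
qed

end

lemma no_zeros_imp_constant_sign:
  fixes x :: "real \<Rightarrow> real"
  assumes "continuous_on {T..} x" "\<forall>t\<ge>T. x t \<noteq> 0"
  shows "(\<forall>t\<ge>T. 0 < x t) \<or> (\<forall>t\<ge>T. x t < 0)"
proof (rule ccontr)
  assume "\<not> ?thesis"
  then obtain a b where "T \<le> a" "x a \<le> 0" "T \<le> b" "0 \<le> x b"
    by (auto simp: not_less)
  moreover have "continuous_on {min a b..max a b} x"
    by (rule continuous_on_subset[OF assms(1)]) (use \<open>T \<le> a\<close> \<open>T \<le> b\<close> in auto)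
  ultimately have "\<exists>c\<ge>min a b. x c = 0"
    using IVT'[of x a 0 b] IVT2'[of x a 0 b] by (cases "a \<le> b") (auto simp: min_def max_def)
  then show False using assms(2) \<open>T \<le> a\<close> \<open>T \<le> b\<close> by force
qed

lemma is_solution_uminus:
  assumes "is_solution m p \<tau> t0 T0 x"
  shows "is_solution m p \<tau> t0 T0 (\<lambda>t. - x t)"
proof -
  from assms obtain x' where "t0 \<le> T0" "continuous_on {T0..} x"
    and "continuous_on {tau_inv m \<tau> t0 T0..} x'"
    and sol: "\<forall>t \<in> {tau_inv m \<tau> t0 T0..}.
      (x has_real_derivative x' t) (at t within {tau_inv m \<tau> t0 T0..}) \<and>
      x' t + (\<Sum>i=1..m. p i t * x (\<tau> i t)) = 0"
    unfolding is_solution_def by blast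
  then show ?thesis
    unfolding is_solution_def
    by (intro conjI exI[of _ "\<lambda>t. - x' t"])
       (auto intro!: continuous_intros DERIV_minus simp: sum_negf add_eq_0_iff)
qed

lemma positive_delay_solution_if_eventually_positive:
  assumes sol: "is_solution m p \<tau> t0 T0 x" and pos: "\<forall>t\<ge>T. 0 < x t"
    and p_cont: "\<forall>i\<in>{1..m}. continuous_on {t0..} (p i)"
    and p_nonneg: "\<forall>i\<in>{1..m}. \<forall>t\<ge>t0. p i t \<ge> 0"
    and tau_cont: "\<forall>i\<in>{1..m}. continuous_on {t0..} (\<tau> i)"
    and tau_le: "\<forall>i\<in>{1..m}. \<forall>t\<ge>t0. \<tau> i t \<le> t"
    and tau_lim: "\<forall>i\<in>{1..m}. filterlim (\<tau> i) at_top at_top"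
  obtains x' T' where "positive_delay_solution m p \<tau> x x' T'" "t0 \<le> T'"
proof -
  define S where "S = tau_inv m \<tau> t0 T0"
  from sol obtain x' where sol': "\<And>t. S \<le> t \<Longrightarrow>
      (x has_real_derivative x' t) (at t within {S..}) \<and> x' t + (\<Sum>i=1..m. p i t * x (\<tau> i t)) = 0"
    unfolding is_solution_def S_def by auto
  define T' where "T' = max T (max t0 S)"
  have "positive_delay_solution m p \<tau> x x' T'"
  proof
    fix t assume "T' \<le> t"
    then have "S \<le> t" by (simp add: T'_def)
    from sol'[OF this] show "(x has_real_derivative x' t) (at t within {T'..})"
      by (elim conjE DERIV_subset) (auto simp: T'_def)
    from sol'[OF \<open>S \<le> t\<close>] show "x' t = - (\<Sum>i=1..m. p i t * x (\<tau> i t))"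
      by (simp add: eq_neg_iff_add_eq_0)
    show "0 < x t" using pos \<open>T' \<le> t\<close> by (auto simp: T'_def)
  next
    fix i t assume "i \<in> {1..m}" "T' \<le> t"
    then show "0 \<le> p i t" "\<tau> i t \<le> t" using p_nonneg tau_le by (auto simp: T'_def)
  next
    fix i assume i: "i \<in> {1..m}"
    show "continuous_on {T'..} (p i)"
      by (rule continuous_on_subset[of "{t0..}"]) (use p_cont i in \<open>auto simp: T'_def\<close>)
    show "continuous_on {T'..} (\<tau> i)"
      by (rule continuous_on_subset[of "{t0..}"]) (use tau_cont i in \<open>auto simp: T'_def\<close>)
    show "filterlim (\<tau> i) at_top at_top" using tau_lim i by auto
  qed
  then show thesis by (rule that) (simp add: T'_def)
qed

theorem theorem3p2:
  fixes m :: nat and t0 :: real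
    and p \<tau> \<sigma> :: "nat \<Rightarrow> real \<Rightarrow> real"
    and \<beta> lam :: "nat \<Rightarrow> real"
  assumes m: "m \<ge> 1"
    and p_cont: "\<forall>i\<in>{1..m}. continuous_on {t0..} (p i)"
    and p_nonneg: "\<forall>i\<in>{1..m}. \<forall>t\<ge>t0. p i t \<ge> 0"
    and tau_cont: "\<forall>i\<in>{1..m}. continuous_on {t0..} (\<tau> i)"
    and tau_nonneg: "\<forall>i\<in>{1..m}. \<forall>t\<ge>t0. \<tau> i t \<ge> 0"
    and tau_le: "\<forall>i\<in>{1..m}. \<forall>t\<ge>t0. \<tau> i t \<le> t"
    and tau_lim: "\<forall>i\<in>{1..m}. filterlim (\<tau> i) at_top at_top"
    and beta: "\<forall>i\<in>{1..m}.
        Liminf at_top (\<lambda>t. ereal (integral {\<tau> i t..t} (p i))) = ereal (\<beta> i)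
        \<and> 0 < \<beta> i \<and> \<beta> i \<le> 1 / exp 1"
    and lam_root: "\<forall>i\<in>{1..m}. exp (\<beta> i * lam i) = lam i"
    and lam_least: "\<forall>i\<in>{1..m}. \<forall>y. exp (\<beta> i * y) = y \<longrightarrow> lam i \<le> y"
    and sigma_cont: "\<forall>i\<in>{1..m}. continuous_on {t0..} (\<sigma> i)"
    and sigma_mono: "\<forall>i\<in>{1..m}. mono_on {t0..} (\<sigma> i)"
    and sigma_bounds: "\<forall>i\<in>{1..m}. \<forall>t\<ge>t0. \<tau> i t \<le> \<sigma> i t \<and> \<sigma> i t \<le> t"
    and cond: "Limsup (at_right 0) (\<lambda>\<epsilon>::real.
        Limsup at_top (\<lambda>t. ereal
          (\<Prod>j=1..m. (\<Prod>i=1..m.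
              integral {\<sigma> j t..t} (\<lambda>s. p i s *
                exp (oint (\<tau> i s) (\<sigma> i t)
                       (\<lambda>\<xi>. \<Sum>k=1..m. (lam k - \<epsilon>) * p k \<xi>))))
            powr (1 / real m))))
        > ereal (1 / real m ^ m)"
  shows "\<forall>T0 x. is_solution m p \<tau> t0 T0 x \<longrightarrow> oscillatory x"
proof (intro allI impI)
  have not_eventually_positive: "\<not> (\<forall>t\<ge>T. 0 < y t)" if sol: "is_solution m p \<tau> t0 T0 y" for T0 T y
  proof
    assume "\<forall>t\<ge>T. 0 < y t"
    from sol this p_cont p_nonneg tau_cont tau_le tau_lim obtain y' T'
      where y: "positive_delay_solution m p \<tau> y y' T'" and "t0 \<le> T'"
      by (rule positive_delay_solution_if_eventually_positive)
    have mono: "mono_on {T'..} (\<sigma> i)" if "i \<in> {1..m}" for i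
      by (rule mono_on_subset[of "{t0..}"]) (use sigma_mono that \<open>t0 \<le> T'\<close> in auto)
    have "Limsup (at_right 0) (\<lambda>\<epsilon>::real. Limsup at_top (\<lambda>t. ereal
        (\<Prod>j=1..m. (\<Prod>i=1..m. integral {\<sigma> j t..t} (\<lambda>s. p i s *
           exp (oint (\<tau> i s) (\<sigma> i t) (\<lambda>\<xi>. \<Sum>k=1..m. (lam k - \<epsilon>) * p k \<xi>))))
         powr (1 / real m)))) \<le> ereal (1 / real m ^ m)"
      by (rule positive_delay_solution.limsup_product_le[OF y m _ _ mono])
         (use beta lam_least sigma_bounds \<open>t0 \<le> T'\<close> in auto)
    with cond show False by simp
  qed
  fix T0 x assume sol: "is_solution m p \<tau> t0 T0 x"
  show "oscillatory x"
  proof (rule ccontr)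
    assume "\<not> oscillatory x"
    then obtain T where zeros: "\<forall>t\<ge>max T T0. x t \<noteq> 0" by (auto simp: oscillatory_def)
    have "continuous_on {T0..} x" using sol by (simp add: is_solution_def)
    then have "continuous_on {max T T0..} x" by (rule continuous_on_subset) auto
    from no_zeros_imp_constant_sign[OF this zeros] show False
      using not_eventually_positive[OF sol, of "max T T0"]
        not_eventually_positive[OF is_solution_uminus[OF sol], of "max T T0"]
      by auto
  qed
qed

end
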